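(* Let $p>5$ be a prime, $q=p^h$, and let $\mathcal{F}$ be the projective closure of $ax^n+by^m=1$ over $\mathbb{F}_q$, with $a,b\in\mathbb{F}_q^*$ and $m,n$ positive integers, $n\ge m>2$. Then $\mathcal{F}$ is classical with respect to the linear system $\Sigma_2$ of conics in each of the following cases: (a) $p\mid(2n-1)$ and $p\mid(m+1)$; (b) $p\mid(2m-1)$ and $p\mid(n+1)$; (c) $p\mid(2n-1)$ and $p\mid(m-2)$; (d) $p\mid(2m-1)$ and $p\mid(n-2)$; (e) $p\mid(m+1)$ and $p\mid(n-2)$; (f) $p\mid(n+1)$ and $p\mid(m-2)$.
   Context: For a geometrically irreducible projective plane curve over $\mathbb{F}_q$ with function field $\overline{\mathbb{F}}_q(x,y)$, let $\varphi_0,\dots,\varphi_5$ be the monomials of degree 2 in $x,y,1$, $\tau$ separating and $D^{(k)}_\tau$ Hasse derivatives. The order sequence w.r.t. conics is the lexicographically smallest $\varepsilon_0<\dots<\varepsilon_5$ with $\det(D^{(\varepsilon_i)}_\tau\varphi_j)\neq0$; the curve is classical w.r.t. $\Sigma_2$ if $\varepsilon_i=i$ for all $i$. *)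

theory Defs
  imports "HOL-Computational_Algebra.Polynomial" "Jordan_Normal_Form.Determinant"
begin

text \<open>The constant field: elements of the ambient field F that are algebraic over the
prime field F_p, i.e. the fixed points of some power of Frobenius.  In the function
field of a curve over the algebraic closure of F_q this is exactly that closure.\<close>
definition const_field :: "nat \<Rightarrow> 'f::field set" where
  "const_field p = {c. \<exists>r>0. c ^ (p ^ r) = c}"

definition alg_closed_subfield :: "'f::field set \<Rightarrow> bool" where
  "alg_closed_subfield K \<longleftrightarrow>
     (\<forall>P::'f poly. (\<forall>i. coeff P i \<in> K) \<and> degree P > 0 \<longrightarrow> (\<exists>c\<in>K. poly P c = 0))"

definition transcendental_over :: "'f::field set \<Rightarrow> 'f \<Rightarrow> bool" where
  "transcendental_over K t \<longleftrightarrow>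
     (\<forall>P::'f poly. (\<forall>i. coeff P i \<in> K) \<and> P \<noteq> 0 \<longrightarrow> poly P t \<noteq> 0)"

definition hasse_derivation :: "'f::field set \<Rightarrow> 'f \<Rightarrow> (nat \<Rightarrow> 'f \<Rightarrow> 'f) \<Rightarrow> bool" where
  "hasse_derivation K tau D \<longleftrightarrow>
     (\<forall>u. D 0 u = u) \<and>
     (\<forall>k u v. D k (u + v) = D k u + D k v) \<and>
     (\<forall>k u v. D k (u * v) = (\<Sum>i\<le>k. D i u * D (k - i) v)) \<and>
     (\<forall>k c. k > 0 \<longrightarrow> c \<in> K \<longrightarrow> D k c = 0) \<and>
     (\<forall>i j u. D i (D j u) = of_nat ((i + j) choose i) * D (i + j) u) \<and>
     D 1 tau = 1 \<and> (\<forall>k\<ge>2. D k tau = 0)"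

definition conic_monomials :: "'f::field \<Rightarrow> 'f \<Rightarrow> nat \<Rightarrow> 'f" where
  "conic_monomials x y j = [1, x, y, x^2, x*y, y^2] ! j"

definition wronskian_rows :: "(nat \<Rightarrow> 'f \<Rightarrow> 'f) \<Rightarrow> (nat \<Rightarrow> 'f) \<Rightarrow> (nat \<Rightarrow> nat) \<Rightarrow> 'f::field" where
  "wronskian_rows D phi eps = det (mat 6 6 (\<lambda>(i,j). D (eps i) (phi j)))"

definition strict_incr6 :: "(nat \<Rightarrow> nat) \<Rightarrow> bool" where
  "strict_incr6 eps \<longleftrightarrow> (\<forall>i j. i < j \<longrightarrow> j < 6 \<longrightarrow> eps i < eps j)"

definition lex_less6 :: "(nat \<Rightarrow> nat) \<Rightarrow> (nat \<Rightarrow> nat) \<Rightarrow> bool" where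
  "lex_less6 e1 e2 \<longleftrightarrow> (\<exists>k<6. (\<forall>i<k. e1 i = e2 i) \<and> e1 k < e2 k)"

definition is_conic_order_seq :: "(nat \<Rightarrow> 'f::field \<Rightarrow> 'f) \<Rightarrow> 'f \<Rightarrow> 'f \<Rightarrow> (nat \<Rightarrow> nat) \<Rightarrow> bool" where
  "is_conic_order_seq D x y eps \<longleftrightarrow>
     strict_incr6 eps \<and> wronskian_rows D (conic_monomials x y) eps \<noteq> 0 \<and>
     (\<forall>e. strict_incr6 e \<and> wronskian_rows D (conic_monomials x y) e \<noteq> 0 \<longrightarrow> \<not> lex_less6 e eps)"

definition classical_wrt_conics :: "(nat \<Rightarrow> 'f \<Rightarrow> 'f) \<Rightarrow> 'f \<Rightarrow> 'f::field \<Rightarrow> bool" where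
  "classical_wrt_conics D x y \<longleftrightarrow>
     (\<exists>eps. is_conic_order_seq D x y eps \<and> (\<forall>i<6. eps i = i))"

end

(* Put u = a x^n and X = x (1 - u), and write the field elements n and n/m as N/c and S/c with
   integers N, S, c.  Differentiating the curve equation and iterating D_1 D_k = (k + 1) D_(k+1) gives
   k! (c X)^k D_k y = y P_k(u) for explicit integer polynomials P_k.  Since D_k x = 0 for k >= 2, the
   Wronskian of the conics for the orders 0, ..., 5 is, up to sign,
   Delta = D_2 y (2 (D_3 y)^3 - 3 D_2 y D_3 y D_4 y + (D_2 y)^2 D_5 y), and 8640 (c X)^11 Delta = y^4 W(u)
   for a polynomial W built from P_2, ..., P_5.  In each of the six cases n and m are congruent modulo p
   to one of 1/2, -1, 2, so W is a fixed integer polynomial, and one of its coefficients has no prime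
   factor other than 2, 3, 5; hence W is nonzero in characteristic p > 5.  As u is transcendental over
   F_q, W(u) is nonzero, so Delta is nonzero and the order sequence is 0, ..., 5. *)

theory Submission
  imports Defs "HOL-Computational_Algebra.Primes"
begin

lemma CHAR_eq_prime:
  assumes "prime p" and "of_nat p = (0::'a::semiring_1)"
  shows "CHAR('a) = p"
proof -
  have "CHAR('a) dvd p"
    using assms(2) of_nat_eq_0_iff_char_dvd by blast
  then show ?thesis
    using assms(1) CHAR_not_1 by (metis prime_nat_iff One_nat_def)
qed

lemma of_nat_smooth_neq_0:
  assumes "prime CHAR('a::semiring_1)" and "CHAR('a) > 5"
  shows "(of_nat (2 ^ i * 3 ^ j * 5 ^ k) :: 'a) \<noteq> 0"
proof
  assume "(of_nat (2 ^ i * 3 ^ j * 5 ^ k) :: 'a) = 0"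
  then have "CHAR('a) dvd 2 ^ i * 3 ^ j * 5 ^ k"
    using of_nat_eq_0_iff_char_dvd by blast
  then have "CHAR('a) dvd 2 \<or> CHAR('a) dvd 3 \<or> CHAR('a) dvd 5"
    using assms(1) by (auto simp: prime_dvd_mult_iff dest: prime_dvd_power)
  then show False
    using assms(2) by (auto dest: dvd_imp_le)
qed

lemma of_nat_eq_if_CHAR_dvd_diff:
  "CHAR('a) dvd k - l \<Longrightarrow> l \<le> k \<Longrightarrow> (of_nat k :: 'a::comm_ring_1) = of_nat l"
  by (metis of_nat_eq_0_iff_char_dvd of_nat_diff eq_iff_diff_eq_0)

lemma of_nat_eq_neg_if_CHAR_dvd_add:
  "CHAR('a) dvd k + l \<Longrightarrow> (of_nat k :: 'a::comm_ring_1) = - of_nat l"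
  by (metis of_nat_eq_0_iff_char_dvd of_nat_add eq_neg_iff_add_eq_0)

definition frobenius_fixed :: "nat \<Rightarrow> 'a::comm_ring_1 set" where
  "frobenius_fixed r = {c. c ^ (CHAR('a) ^ r) = c}"

lemma frobenius_fixed_1 [simp]: "(1::'a::comm_ring_1) \<in> frobenius_fixed r"
  by (simp add: frobenius_fixed_def)

lemma frobenius_fixed_mult:
  "x \<in> frobenius_fixed r \<Longrightarrow> y \<in> frobenius_fixed r \<Longrightarrow> (x * y :: 'a::comm_ring_1) \<in> frobenius_fixed r"
  by (simp add: frobenius_fixed_def power_mult_distrib)

context
  assumes prime_char: "prime CHAR('a::comm_ring_1)"
begin

lemma CHAR_power_pos: "CHAR('a) ^ r > 0"
  using prime_char by (simp add: prime_gt_0_nat)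

lemma frobenius_fixed_0 [simp]: "(0::'a) \<in> frobenius_fixed r"
  by (simp add: frobenius_fixed_def zero_power[OF CHAR_power_pos])

lemma frobenius_fixed_add:
  "x \<in> frobenius_fixed r \<Longrightarrow> y \<in> frobenius_fixed r \<Longrightarrow> (x + y :: 'a) \<in> frobenius_fixed r"
  using prime_char by (simp add: frobenius_fixed_def freshmans_dream')

lemma frobenius_fixed_uminus:
  assumes "(x::'a) \<in> frobenius_fixed r"
  shows "- x \<in> frobenius_fixed r"
proof -
  have "0 = x ^ (CHAR('a) ^ r) + (- x) ^ (CHAR('a) ^ r)"
    using freshmans_dream'[OF prime_char refl, where x = x and y = "- x" and n = r]
    by (simp add: zero_power[OF CHAR_power_pos])
  then show ?thesis
    using assms by (simp add: frobenius_fixed_def eq_neg_iff_add_eq_0 add.commute)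
qed

lemma Ints_subset_frobenius_fixed: "(\<int> :: 'a set) \<subseteq> frobenius_fixed r"
proof
  fix z :: 'a
  assume "z \<in> \<int>"
  then obtain k where "z = of_int k"
    by (auto elim: Ints_cases)
  moreover have "(of_nat n :: 'a) \<in> frobenius_fixed r" for n
    by (induction n) (simp_all add: frobenius_fixed_add)
  ultimately show "z \<in> frobenius_fixed r"
    by (cases k rule: int_cases2) (simp_all add: frobenius_fixed_uminus)
qed

end

lemma frobenius_fixed_subset_const_field:
  "r > 0 \<Longrightarrow> frobenius_fixed r \<subseteq> (const_field CHAR('a) :: 'a::field set)"
  by (auto simp: frobenius_fixed_def const_field_def)

lemma transcendental_over_subset:
  "transcendental_over K t \<Longrightarrow> R \<subseteq> K \<Longrightarrow> transcendental_over R t"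
  unfolding transcendental_over_def by blast

lemma transcendental_over_mult_power:
  fixes R :: "'a::field set"
  assumes trans: "transcendental_over R t"
    and R_0: "0 \<in> R"
    and R_add: "\<And>x y. x \<in> R \<Longrightarrow> y \<in> R \<Longrightarrow> x + y \<in> R"
    and R_mult: "\<And>x y. x \<in> R \<Longrightarrow> y \<in> R \<Longrightarrow> x * y \<in> R"
    and "a \<in> R" "a \<noteq> 0" "n > 0"
  shows "transcendental_over R (a * t ^ n)"
  unfolding transcendental_over_def
proof (intro allI impI)
  fix P :: "'a poly"
  assume P: "(\<forall>i. coeff P i \<in> R) \<and> P \<noteq> 0"
  have "\<forall>i. coeff (pcompose P (monom a n)) i \<in> R"
    using P \<open>a \<in> R\<close> R_0 by (intro allI coeff_pcompose_semiring_closed[OF R_0 R_add R_mult]) auto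
  moreover have "pcompose P (monom a n) \<noteq> 0"
    using P pcompose_eq_0[of P "monom a n"] \<open>a \<noteq> 0\<close> \<open>n > 0\<close> by (auto simp: degree_monom_eq)
  ultimately have "poly (pcompose P (monom a n)) t \<noteq> 0"
    using trans unfolding transcendental_over_def by blast
  then show "poly P (a * t ^ n) \<noteq> 0"
    by (simp add: poly_pcompose poly_monom)
qed

lemma strict_incr6_ge: "strict_incr6 e \<Longrightarrow> i < 6 \<Longrightarrow> i \<le> e i"
proof (induction i)
  case (Suc i)
  then have "e i < e (Suc i)"
    unfolding strict_incr6_def by auto
  with Suc show ?case
    by simp
qed simp

lemma classical_wrt_conics_if_wronskian_id:
  assumes "wronskian_rows D (conic_monomials x y) id \<noteq> 0"
  shows "classical_wrt_conics D x y"
  unfolding classical_wrt_conics_def is_conic_order_seq_def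
proof (intro exI[of _ id] conjI allI impI)
  fix e
  assume "strict_incr6 e \<and> wronskian_rows D (conic_monomials x y) e \<noteq> 0"
  then show "\<not> lex_less6 e id"
    using strict_incr6_ge unfolding lex_less6_def by (auto simp: not_less)
qed (use assms in \<open>auto simp: strict_incr6_def\<close>)

lemma det_mat_eq_0_kernel:
  fixes f :: "nat \<times> nat \<Rightarrow> 'a::field"
  assumes "det (mat n n f) = 0"
  obtains v where "v \<in> carrier_vec n" "v \<noteq> 0\<^sub>v n" "\<And>i. i < n \<Longrightarrow> (\<Sum>j\<in>{0..<n}. f (i, j) * v $ j) = 0"
proof -
  obtain v where v: "v \<in> carrier_vec n" "v \<noteq> 0\<^sub>v n" "mat n n f *\<^sub>v v = 0\<^sub>v n"
    using det_0_iff_vec_prod_zero_field[OF mat_carrier] assms by blast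
  have "(\<Sum>j\<in>{0..<n}. f (i, j) * v $ j) = 0" if "i < n" for i
  proof -
    have "row (mat n n f) i \<bullet> v = 0"
      using arg_cong[OF v(3), of "\<lambda>w. w $ i"] that by simp
    moreover have "row (mat n n f) i \<bullet> v = (\<Sum>j\<in>{0..<n}. f (i, j) * v $ j)"
      using v(1) that unfolding scalar_prod_def by (intro sum.cong) auto
    ultimately show ?thesis
      by simp
  qed
  with v that show ?thesis
    by blast
qed

lemma conic_wronskian_system_trivial:
  fixes A B W a2 a3 a4 a5 :: "'a::field"
  assumes e3: "a3 * A + a2 * B = 0"
    and e4: "a4 * A + a3 * B + a2\<^sup>2 * W = 0"
    and e5: "a5 * A + a4 * B + 2 * a2 * a3 * W = 0"
    and det: "a2 * (2 * a3 ^ 3 - 3 * a2 * a3 * a4 + a2\<^sup>2 * a5) \<noteq> 0"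
  shows "A = 0" "B = 0" "W = 0"
proof -
  let ?d = "a2 * (2 * a3 ^ 3 - 3 * a2 * a3 * a4 + a2\<^sup>2 * a5)"
  have "?d * A = (2 * a2 * a3\<^sup>2 - a2\<^sup>2 * a4) * (a3 * A + a2 * B)
      - 2 * a2\<^sup>2 * a3 * (a4 * A + a3 * B + a2\<^sup>2 * W) + a2 ^ 3 * (a5 * A + a4 * B + 2 * a2 * a3 * W)"
    by (simp add: algebra_simps power2_eq_square power3_eq_cube)
  then show "A = 0"
    using e3 e4 e5 det by simp
  have "?d * B = - (2 * a2 * a3 * a4 - a2\<^sup>2 * a5) * (a3 * A + a2 * B)
      + 2 * a2 * a3\<^sup>2 * (a4 * A + a3 * B + a2\<^sup>2 * W) - a3 * a2\<^sup>2 * (a5 * A + a4 * B + 2 * a2 * a3 * W)"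
    by (simp add: algebra_simps power2_eq_square power3_eq_cube)
  then show "B = 0"
    using e3 e4 e5 det by simp
  have "?d * W = (a4\<^sup>2 - a3 * a5) * (a3 * A + a2 * B)
      - (a3 * a4 - a2 * a5) * (a4 * A + a3 * B + a2\<^sup>2 * W) + (a3\<^sup>2 - a2 * a4) * (a5 * A + a4 * B + 2 * a2 * a3 * W)"
    by (simp add: algebra_simps power2_eq_square power3_eq_cube)
  then show "W = 0"
    using e3 e4 e5 det by simp
qed

locale hasse_derivatives =
  fixes K :: "'f::field set" and t :: 'f and D :: "nat \<Rightarrow> 'f \<Rightarrow> 'f"
  assumes hasse: "hasse_derivation K t D" and one_mem: "1 \<in> K"
begin

lemma D_0: "D 0 u = u"
  and D_add: "D k (u + v) = D k u + D k v"
  and D_mult: "D k (u * v) = (\<Sum>i\<le>k. D i u * D (k - i) v)"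
  and D_const: "k > 0 \<Longrightarrow> c \<in> K \<Longrightarrow> D k c = 0"
  and D_D: "D i (D j u) = of_nat ((i + j) choose i) * D (i + j) u"
  and D_1_t: "D 1 t = 1"
  and D_t: "k \<ge> 2 \<Longrightarrow> D k t = 0"
  using hasse unfolding hasse_derivation_def by blast+

lemma D_zero: "D k 0 = 0"
  using D_add[of k 0 0] by (metis add_0 add_cancel_right_right)

lemma D_uminus: "D k (- u) = - D k u"
  using D_add[of k u "- u"] by (simp add: D_zero eq_neg_iff_add_eq_0 add.commute)

lemma D_one: "k > 0 \<Longrightarrow> D k 1 = 0"
  using D_const one_mem by blast

lemma D1_mult: "D 1 (u * v) = u * D 1 v + D 1 u * v"
  using D_mult[of 1 u v] by (simp add: D_0)

lemma D1_power: "w * D 1 (w ^ k) = of_nat k * w ^ k * D 1 w"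
proof (induction k)
  case (Suc k)
  have "w * D 1 (w ^ Suc k) = w * (w * D 1 (w ^ k)) + w * (D 1 w * w ^ k)"
    using D1_mult[of w "w ^ k"] by (simp add: distrib_left)
  also have "\<dots> = of_nat (Suc k) * w ^ Suc k * D 1 w"
    using Suc by (simp add: algebra_simps)
  finally show ?case .
qed (simp add: D_one)

lemma D1_D: "D 1 (D k w) = of_nat (Suc k) * D (Suc k) w"
  using D_D[of 1 k w] by simp

lemma D1_power_mult_D:
  "w * D 1 (w ^ k * D k v) = of_nat (Suc k) * w ^ Suc k * D (Suc k) v + of_nat k * D 1 w * (w ^ k * D k v)"
proof -
  have "w * D 1 (w ^ k * D k v) = w ^ k * w * D 1 (D k v) + (w * D 1 (w ^ k)) * D k v"
    unfolding D1_mult by (simp add: algebra_simps)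
  then show ?thesis
    unfolding D1_D D1_power by (simp add: algebra_simps)
qed

lemma D1_Ints: "c \<in> \<int> \<Longrightarrow> D 1 c = 0"
proof (induction rule: Ints_induct)
  case (of_int z)
  have "D 1 (of_nat n) = 0" for n
    by (induction n) (simp_all add: D_zero D_add D_one)
  then show ?case
    by (cases z rule: int_cases2) (simp_all add: D_uminus)
qed

lemma D1_poly:
  assumes "\<And>i. D 1 (coeff Q i) = 0"
  shows "D 1 (poly Q w) = poly (pderiv Q) w * D 1 w"
  using assms
proof (induction Q)
  case (pCons c Q)
  have "D 1 (poly (pCons c Q) w) = w * D 1 (poly Q w) + D 1 w * poly Q w"
    using pCons.prems[of 0] D1_mult[of w "poly Q w"] by (simp add: D_add)
  also have "\<dots> = poly (pderiv (pCons c Q)) w * D 1 w"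
    using pCons.IH pCons.prems[of "Suc _"] by (simp add: pderiv_pCons algebra_simps)
  finally show ?case .
qed (simp add: D_zero)

(* As D_k t = 0 for k >= 2, rows 3 to 5 of the kernel equations only involve three combinations
   of the coordinates of a kernel vector, and the hypothesis is the determinant of that system. *)
lemma wronskian_conic_monomials_neq_0:
  assumes Delta: "D 2 y * (2 * D 3 y ^ 3 - 3 * D 2 y * D 3 y * D 4 y + D 2 y ^ 2 * D 5 y) \<noteq> 0"
  shows "wronskian_rows D (conic_monomials t y) id \<noteq> 0"
proof
  let ?Y = "\<lambda>k. D k y"
  assume "wronskian_rows D (conic_monomials t y) id = 0"
  then obtain v :: "'f vec" where v: "v \<in> carrier_vec 6" "v \<noteq> 0\<^sub>v 6"
    and row: "\<And>i. i < 6 \<Longrightarrow> (\<Sum>j\<in>{0..<6}. D i (conic_monomials t y j) * v $ j) = 0"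
    unfolding wronskian_rows_def by (auto elim!: det_mat_eq_0_kernel)
  have atMost: "{..0::nat} = {0}" "{..Suc 0} = {0, 1}" "{..2::nat} = {0, 1, 2}"
    "{..3::nat} = {0, 1, 2, 3}" "{..4::nat} = {0, 1, 2, 3, 4}" "{..5::nat} = {0, 1, 2, 3, 4, 5}"
    by auto
  have "{0..<6::nat} = {0, 1, 2, 3, 4, 5}"
    by auto
  note simps = this atMost conic_monomials_def power2_eq_square D_mult D_0 D_1_t[unfolded One_nat_def]
    D_t D_one
  have e0: "v$0 + t*v$1 + y*v$2 + t*t*v$3 + t*y*v$4 + y*y*v$5 = 0"
    using row[of 0] by (simp add: simps algebra_simps)
  have e1: "v$1 + ?Y 1*v$2 + 2*t*v$3 + (t*?Y 1 + y)*v$4 + 2*y*?Y 1*v$5 = 0"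
    using row[of 1] by (simp add: simps algebra_simps)
  have e2: "v$3 + ?Y 2*v$2 + (t*?Y 2 + ?Y 1)*v$4 + (2*y*?Y 2 + ?Y 1^2)*v$5 = 0"
    using row[of 2] by (simp add: simps algebra_simps)
  have e3: "?Y 3 * (v$2 + t*v$4 + 2*y*v$5) + ?Y 2 * (v$4 + 2*?Y 1*v$5) = 0"
    using row[of 3] by (simp add: simps algebra_simps)
  have e4: "?Y 4 * (v$2 + t*v$4 + 2*y*v$5) + ?Y 3 * (v$4 + 2*?Y 1*v$5) + ?Y 2^2 * v$5 = 0"
    using row[of 4] by (simp add: simps algebra_simps)
  have e5: "?Y 5 * (v$2 + t*v$4 + 2*y*v$5) + ?Y 4 * (v$4 + 2*?Y 1*v$5) + 2 * ?Y 2 * ?Y 3 * v$5 = 0"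
    using row[of 5] by (simp add: simps algebra_simps)
  from conic_wronskian_system_trivial[OF e3 e4 e5 Delta]
  have "v$5 = 0" "v$4 = 0" "v$2 = 0"
    by auto
  moreover from this e2 have "v$3 = 0"
    by simp
  moreover from calculation e1 have "v$1 = 0"
    by simp
  moreover from calculation e0 have "v$0 = 0"
    by simp
  ultimately have "v $ i = 0" if "i < 6" for i
    using that by (auto simp: less_Suc_eq numeral_eq_Suc)
  then have "v = 0\<^sub>v 6"
    using v(1) by (intro eq_vecI) auto
  with v(2) show False
    by simp
qed

end

(* On the curve a x^n + b y^m = 1 with n = N/c and n/m = S/c, hasse_poly N S c k evaluated at
   u = a x^n is k! (c x (1 - u))^k D_k y / y; the scaling by c keeps the coefficients integral. *)
fun hasse_poly :: "'a::idom \<Rightarrow> 'a \<Rightarrow> 'a \<Rightarrow> nat \<Rightarrow> 'a poly" where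
  "hasse_poly N S c 0 = 1"
| "hasse_poly N S c (Suc k) =
     smult N ([:0, 1, -1:] * pderiv (hasse_poly N S c k))
     + [:- of_nat k * c, of_nat k * (N + c) - S:] * hasse_poly N S c k"

definition conic_wronskian_poly :: "'a::idom \<Rightarrow> 'a \<Rightarrow> 'a \<Rightarrow> 'a poly" where
  "conic_wronskian_poly N S c = (let P = hasse_poly N S c in
     P 2 * (smult 40 (P 3 ^ 3) - smult 45 (P 2 * P 3 * P 4) + smult 9 (P 2 ^ 2 * P 5)))"

lemmas coeff_mult_Ints = coeff_mult_semiring_closed[OF Ints_0 Ints_add Ints_mult]

lemma coeff_power_Ints: "(\<And>i. coeff p i \<in> \<int>) \<Longrightarrow> coeff (p ^ e) i \<in> \<int>"
  by (induction e arbitrary: i) (auto simp: coeff_1 intro: coeff_mult_Ints)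

lemma coeff_hasse_poly_Ints:
  assumes "N \<in> \<int>" "S \<in> \<int>" "c \<in> \<int>"
  shows "coeff (hasse_poly N S c k) i \<in> \<int>"
proof (induction k arbitrary: i)
  case (Suc k)
  have "coeff ([:0, 1, -1:] * pderiv (hasse_poly N S c k)) i \<in> \<int>" for i
    using Suc by (intro coeff_mult_Ints) (auto simp: coeff_pCons coeff_pderiv split: nat.split)
  moreover have "coeff ([:- of_nat k * c, of_nat k * (N + c) - S:] * hasse_poly N S c k) i \<in> \<int>"
    using Suc assms by (intro coeff_mult_Ints) (auto simp: coeff_pCons split: nat.split)
  ultimately show ?case
    using assms by (metis Ints_add Ints_mult coeff_add coeff_smult hasse_poly.simps(2))
qed (simp add: coeff_1)

lemma coeff_conic_wronskian_poly_Ints: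
  assumes "N \<in> \<int>" "S \<in> \<int>" "c \<in> \<int>"
  shows "coeff (conic_wronskian_poly N S c) i \<in> \<int>"
proof -
  note P = coeff_hasse_poly_Ints[OF assms]
  let ?P = "hasse_poly N S c"
  have "coeff (smult 40 (?P 3 ^ 3) - smult 45 (?P 2 * ?P 3 * ?P 4) + smult 9 (?P 2 ^ 2 * ?P 5)) j \<in> \<int>"
    for j
    unfolding coeff_add coeff_diff coeff_smult
    by (intro Ints_add Ints_diff Ints_mult Ints_numeral coeff_mult_Ints coeff_power_Ints P)
  then show ?thesis
    unfolding conic_wronskian_poly_def Let_def by (intro coeff_mult_Ints P)
qed

definition exponent_scaling :: "nat \<Rightarrow> nat \<Rightarrow> 'a::field \<Rightarrow> 'a \<Rightarrow> 'a \<Rightarrow> bool" where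
  "exponent_scaling n m N S c \<longleftrightarrow>
     N \<in> \<int> \<and> S \<in> \<int> \<and> c \<in> \<int> \<and> c \<noteq> 0 \<and> of_nat m \<noteq> (0::'a) \<and> N = c * of_nat n \<and> S * of_nat m = N"

lemma conic_wronskian_homogeneity:
  fixes T y Y2 Y3 Y4 Y5 p2 p3 p4 p5 :: "'a::comm_ring_1"
  assumes "y * p2 = 2 * T\<^sup>2 * Y2" "y * p3 = 6 * T ^ 3 * Y3"
    and "y * p4 = 24 * T ^ 4 * Y4" "y * p5 = 120 * T ^ 5 * Y5"
  shows "8640 * T ^ 11 * (Y2 * (2 * Y3 ^ 3 - 3 * Y2 * Y3 * Y4 + Y2\<^sup>2 * Y5))
    = y ^ 4 * (p2 * (40 * p3 ^ 3 - 45 * p2 * p3 * p4 + 9 * p2\<^sup>2 * p5))"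
proof -
  have "y ^ 4 * (p2 * (40 * p3 ^ 3 - 45 * p2 * p3 * p4 + 9 * p2\<^sup>2 * p5))
    = (y * p2) * (40 * (y * p3) ^ 3 - 45 * (y * p2) * (y * p3) * (y * p4) + 9 * (y * p2)\<^sup>2 * (y * p5))"
    by (simp add: algebra_simps eval_nat_numeral)
  also have "\<dots> = 8640 * T ^ 11 * (Y2 * (2 * Y3 ^ 3 - 3 * Y2 * Y3 * Y4 + Y2\<^sup>2 * Y5))"
    unfolding assms by (simp add: algebra_simps eval_nat_numeral)
  finally show ?thesis ..
qed

locale fermat_curve = hasse_derivatives K x D
  for K :: "'f::field set" and x D +
  fixes a b y :: 'f and n m :: nat
  assumes a_mem: "a \<in> K" and b_mem: "b \<in> K"
    and curve: "a * x ^ n + b * y ^ m = 1"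
begin

definition u :: 'f where "u = a * x ^ n"

definition X :: 'f where "X = x * (1 - u)"

lemma x_D1_u: "x * D 1 u = of_nat n * u"
proof -
  have "D 1 u = a * D 1 (x ^ n)"
    using D1_mult[of a "x ^ n"] D_const[OF _ a_mem, of 1] unfolding u_def by simp
  then have "x * D 1 u = a * (x * D 1 (x ^ n))"
    by (simp add: mult_ac)
  also have "\<dots> = of_nat n * u"
    using D1_power[of x n] D_1_t unfolding u_def by (simp add: mult_ac)
  finally show ?thesis .
qed

lemma D1_X: "D 1 X = 1 - u - of_nat n * u"
  using D1_mult[of x "1 - u"] D_add[of 1 1 "- u"] D_uminus[of 1 u] x_D1_u D_1_t D_one[of 1]
  by (simp add: X_def algebra_simps)

lemma X_D1_y: "of_nat m * (X * D 1 y) = - (of_nat n * u * y)"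
proof -
  have "D 1 u + D 1 (b * y ^ m) = 0"
    using arg_cong[OF curve, of "D 1"] D_add D_one[of 1] by (simp add: u_def)
  moreover have "D 1 (b * y ^ m) = b * D 1 (y ^ m)"
    using D1_mult[of b "y ^ m"] D_const[OF _ b_mem, of 1] by simp
  ultimately have b_D1: "b * D 1 (y ^ m) = - D 1 u"
    by (simp add: eq_neg_iff_add_eq_0 add.commute)
  have "1 - u = b * y ^ m"
    unfolding u_def curve[symmetric] by simp
  then have "X = x * (b * y ^ m)"
    by (simp add: X_def)
  then have "of_nat m * (X * D 1 y) = x * y * (b * D 1 (y ^ m))"
    using D1_power[of y m] by (simp add: mult_ac)
  also have "\<dots> = - (of_nat n * u * y)"
    using x_D1_u unfolding b_D1 by (simp add: mult_ac)
  finally show ?thesis .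
qed

lemma scaled_X_D1_y:
  assumes "exponent_scaling n m N S c"
  shows "c * X * D 1 y = - (S * u * y)"
proof -
  from assms have N: "N = c * of_nat n" and S: "S * of_nat m = N" and m: "of_nat m \<noteq> (0::'f)"
    unfolding exponent_scaling_def by auto
  have "of_nat m * (c * X * D 1 y) = of_nat m * - (S * u * y)"
    using arg_cong[OF X_D1_y, of "\<lambda>z. c * z"] N S by (simp add: algebra_simps)
  then show ?thesis
    using m by (metis mult_left_cancel)
qed

lemma hasse_poly_formula:
  assumes scaling: "exponent_scaling n m N S c"
  shows "of_nat (fact k) * (c * X) ^ k * D k y = y * poly (hasse_poly N S c k) u"
proof (induction k)
  case 0
  then show ?case
    by (simp add: D_0)
next
  case (Suc k)
  from scaling have Ints: "N \<in> \<int>" "S \<in> \<int>" "c \<in> \<int>" and N: "N = c * of_nat n"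
    unfolding exponent_scaling_def by auto
  let ?P = "hasse_poly N S c k"
  define w where "w = of_nat (fact k) * c ^ k"
  have "D 1 w = 0"
    using Ints by (intro D1_Ints) (simp add: w_def)
  have IH: "w * (X ^ k * D k y) = y * poly ?P u"
    using Suc by (simp add: w_def power_mult_distrib mult_ac)
  have coeffs: "D 1 (coeff ?P i) = 0" for i
    using Ints by (intro D1_Ints coeff_hasse_poly_Ints)
  have "c * X * D 1 (y * poly ?P u) = c * w * (X * D 1 (X ^ k * D k y))"
    unfolding IH[symmetric] D1_mult \<open>D 1 w = 0\<close> by (simp add: mult_ac)
  also have "\<dots> = of_nat (fact (Suc k)) * (c * X) ^ Suc k * D (Suc k) y
      + of_nat k * (c - (c + N) * u) * (w * (X ^ k * D k y))"
    unfolding D1_power_mult_D D1_X by (simp add: w_def N algebra_simps power_mult_distrib)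
  also have "\<dots> = of_nat (fact (Suc k)) * (c * X) ^ Suc k * D (Suc k) y
      + of_nat k * (c - (c + N) * u) * (y * poly ?P u)"
    unfolding IH ..
  finally have lhs: "of_nat (fact (Suc k)) * (c * X) ^ Suc k * D (Suc k) y
      = c * X * D 1 (y * poly ?P u) - of_nat k * (c - (c + N) * u) * (y * poly ?P u)"
    by (simp add: eq_diff_eq)
  have "c * X * D 1 (y * poly ?P u)
      = y * poly (pderiv ?P) u * (1 - u) * (c * (x * D 1 u)) + c * X * D 1 y * poly ?P u"
    unfolding D1_mult D1_poly[OF coeffs] by (simp add: X_def algebra_simps)
  also have "\<dots> = y * (N * u * (1 - u) * poly (pderiv ?P) u - S * u * poly ?P u)"
    unfolding x_D1_u scaled_X_D1_y[OF scaling] N by (simp add: algebra_simps)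
  finally show ?case
    unfolding lhs by (simp add: algebra_simps)
qed

lemma conic_wronskian_formula:
  assumes "exponent_scaling n m N S c"
  shows "8640 * (c * X) ^ 11 * (D 2 y * (2 * D 3 y ^ 3 - 3 * D 2 y * D 3 y * D 4 y + D 2 y ^ 2 * D 5 y))
    = y ^ 4 * poly (conic_wronskian_poly N S c) u"
proof -
  let ?p = "\<lambda>k. poly (hasse_poly N S c k) u"
  have "poly (conic_wronskian_poly N S c) u
      = ?p 2 * (40 * ?p 3 ^ 3 - 45 * ?p 2 * ?p 3 * ?p 4 + 9 * ?p 2 ^ 2 * ?p 5)"
    by (simp add: conic_wronskian_poly_def Let_def)
  moreover have "y * ?p 2 = 2 * (c * X)\<^sup>2 * D 2 y" "y * ?p 3 = 6 * (c * X) ^ 3 * D 3 y"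
    "y * ?p 4 = 24 * (c * X) ^ 4 * D 4 y" "y * ?p 5 = 120 * (c * X) ^ 5 * D 5 y"
    using hasse_poly_formula[OF assms, of 2] hasse_poly_formula[OF assms, of 3]
      hasse_poly_formula[OF assms, of 4] hasse_poly_formula[OF assms, of 5]
    by (simp_all add: fact_numeral)
  ultimately show ?thesis
    using conic_wronskian_homogeneity by metis
qed

lemma classical_wrt_conics_if_transcendental:
  fixes N S c :: 'f
  assumes trans: "transcendental_over R u" and "\<int> \<subseteq> R" and "n > 0" "m > 0"
    and char: "prime CHAR('f)" "CHAR('f) > 5"
    and scaling: "exponent_scaling n m N S c" and "conic_wronskian_poly N S c \<noteq> 0"
  shows "classical_wrt_conics D x y"
proof -
  have nonroot: "poly P u \<noteq> 0" if "P \<noteq> 0" "\<And>i. coeff P i \<in> \<int>" for P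
    using trans that \<open>\<int> \<subseteq> R\<close> unfolding transcendental_over_def by blast
  have "u \<noteq> 0" "1 - u \<noteq> 0"
    using nonroot[of "[:0, 1:]"] nonroot[of "[:1, -1:]"] by (auto simp: coeff_pCons split: nat.split)
  then have "X \<noteq> 0"
    using \<open>n > 0\<close> by (auto simp: X_def u_def)
  have "y \<noteq> 0"
    using curve \<open>1 - u \<noteq> 0\<close> \<open>m > 0\<close> by (auto simp: u_def zero_power)
  have "c \<noteq> 0"
    using scaling by (simp add: exponent_scaling_def)
  have "(8640::'f) \<noteq> 0"
    using of_nat_smooth_neq_0[OF char, of 6 3 1] by simp
  have "poly (conic_wronskian_poly N S c) u \<noteq> 0"
    using scaling \<open>conic_wronskian_poly N S c \<noteq> 0\<close>
    by (intro nonroot coeff_conic_wronskian_poly_Ints) (auto simp: exponent_scaling_def)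
  with conic_wronskian_formula[OF scaling] \<open>X \<noteq> 0\<close> \<open>y \<noteq> 0\<close> \<open>c \<noteq> 0\<close> \<open>(8640::'f) \<noteq> 0\<close>
  have "D 2 y * (2 * D 3 y ^ 3 - 3 * D 2 y * D 3 y * D 4 y + D 2 y ^ 2 * D 5 y) \<noteq> 0"
    by auto
  then show ?thesis
    by (intro classical_wrt_conics_if_wronskian_id wronskian_conic_monomials_neq_0)
qed

end

(* The lowest nonzero coefficient in each exceptional case; it has no prime factor above 5. *)
lemma coeff_conic_wronskian_poly_exceptional:
  "coeff (conic_wronskian_poly (1::'a::idom) (- 1) 2) 7 = - 1080"
  "coeff (conic_wronskian_poly (- 1::'a) (- 2) 1) 7 = 34560"
  "coeff (conic_wronskian_poly (2::'a) 1 4) 7 = - 10800"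
  "coeff (conic_wronskian_poly (2::'a) 4 1) 6 = - 414720"
  "coeff (conic_wronskian_poly (2::'a) (- 2) 1) 6 = - 51840"
  "coeff (conic_wronskian_poly (- 2::'a) (- 1) 2) 7 = - 17280"
  by (simp_all add: conic_wronskian_poly_def numeral_eq_Suc pderiv_pCons)

lemma exceptional_residues:
  fixes n m :: nat
  assumes "n \<ge> 2" "m \<ge> 2"
    and "(CHAR('a) dvd (2*n - 1) \<and> CHAR('a) dvd (m + 1)) \<or> (CHAR('a) dvd (2*m - 1) \<and> CHAR('a) dvd (n + 1)) \<or>
         (CHAR('a) dvd (2*n - 1) \<and> CHAR('a) dvd (m - 2)) \<or> (CHAR('a) dvd (2*m - 1) \<and> CHAR('a) dvd (n - 2)) \<or>
         (CHAR('a) dvd (m + 1) \<and> CHAR('a) dvd (n - 2)) \<or> (CHAR('a) dvd (n + 1) \<and> CHAR('a) dvd (m - 2))"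
  shows "(2 * of_nat n = (1::'a::comm_ring_1) \<and> of_nat m = (- 1::'a)) \<or> (of_nat n = (- 1::'a) \<and> 2 * of_nat m = (1::'a)) \<or>
         (2 * of_nat n = (1::'a) \<and> of_nat m = (2::'a)) \<or> (of_nat n = (2::'a) \<and> 2 * of_nat m = (1::'a)) \<or>
         (of_nat n = (2::'a) \<and> of_nat m = (- 1::'a)) \<or> (of_nat n = (- 1::'a) \<and> of_nat m = (2::'a))"
proof -
  have half: "2 * (of_nat k :: 'a) = 1" if "CHAR('a) dvd 2 * k - 1" "k \<ge> 2" for k
    using of_nat_eq_if_CHAR_dvd_diff[OF that(1)] that(2) by simp
  have minus_one: "(of_nat k :: 'a) = - 1" if "CHAR('a) dvd k + 1" for k
    using of_nat_eq_neg_if_CHAR_dvd_add[OF that] by simp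
  have two: "(of_nat k :: 'a) = 2" if "CHAR('a) dvd k - 2" "k \<ge> 2" for k
    using of_nat_eq_if_CHAR_dvd_diff[OF that] by simp
  from assms(3) show ?thesis
    by (elim disjE conjE) (simp_all add: half two minus_one assms(1,2))
qed

lemma exceptional_parameters:
  fixes n m :: nat
  assumes char: "prime CHAR('a)" "CHAR('a) > 5"
    and "(2 * of_nat n = (1::'a) \<and> of_nat m = (- 1::'a)) \<or> (of_nat n = (- 1::'a) \<and> 2 * of_nat m = (1::'a)) \<or>
         (2 * of_nat n = (1::'a) \<and> of_nat m = (2::'a)) \<or> (of_nat n = (2::'a) \<and> 2 * of_nat m = (1::'a)) \<or>
         (of_nat n = (2::'a) \<and> of_nat m = (- 1::'a)) \<or> (of_nat n = (- 1::'a) \<and> of_nat m = (2::'a))"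
  obtains N S c :: "'a::field" where "exponent_scaling n m N S c" and "conic_wronskian_poly N S c \<noteq> 0"
proof -
  note obtain_rule = that
  note smooth = of_nat_smooth_neq_0[OF char]
  have nonzero: "(2::'a) \<noteq> 0" "(4::'a) \<noteq> 0" "(1080::'a) \<noteq> 0" "(34560::'a) \<noteq> 0"
    "(10800::'a) \<noteq> 0" "(414720::'a) \<noteq> 0" "(51840::'a) \<noteq> 0" "(17280::'a) \<noteq> 0"
    using smooth[of 1 0 0] smooth[of 2 0 0] smooth[of 3 3 1] smooth[of 8 3 1]
      smooth[of 4 3 2] smooth[of 10 4 1] smooth[of 7 4 1] smooth[of 7 3 1] by simp_all
  have witness: thesis
    if "N \<in> \<int>" "S \<in> \<int>" "c \<in> \<int>" "coeff (conic_wronskian_poly N S c) j \<noteq> 0"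
      "N = c * of_nat n" "S * of_nat m = N" "c \<noteq> 0" "of_nat m \<noteq> (0::'a)" for N S c :: 'a and j
    using obtain_rule[of N S c] that unfolding exponent_scaling_def by (metis coeff_0)
  have quadruple: "4 * z = (2::'a)" if "2 * z = 1" for z :: 'a
    using that by (metis mult.assoc mult_2 numeral_Bit0 one_add_one)
  note simps = coeff_conic_wronskian_poly_exceptional nonzero
  from assms(3) show thesis
  proof (elim disjE conjE)
    assume "2 * of_nat n = (1::'a)" "of_nat m = (- 1::'a)"
    then show thesis
      by (intro witness[of 1 "- 1" 2 7]) (simp_all add: simps)
  next
    assume "of_nat n = (- 1::'a)" "2 * of_nat m = (1::'a)"
    then show thesis
      by (intro witness[of "- 1" "- 2" 1 7]) (auto simp: simps)
  next
    assume "2 * of_nat n = (1::'a)" "of_nat m = (2::'a)"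
    with quadruple[of "of_nat n"] show thesis
      by (intro witness[of 2 1 4 7]) (simp_all add: simps)
  next
    assume "of_nat n = (2::'a)" "2 * of_nat m = (1::'a)"
    with quadruple[of "of_nat m"] show thesis
      by (intro witness[of 2 4 1 6]) (auto simp: simps)
  next
    assume "of_nat n = (2::'a)" "of_nat m = (- 1::'a)"
    then show thesis
      by (intro witness[of 2 "- 2" 1 6]) (simp_all add: simps)
  next
    assume "of_nat n = (- 1::'a)" "of_nat m = (2::'a)"
    then show thesis
      by (intro witness[of "- 2" "- 1" 2 7]) (simp_all add: simps)
  qed
qed

theorem proposition3p3:
  fixes p h q n m :: nat and a b x y :: "'f::field" and D :: "nat \<Rightarrow> 'f \<Rightarrow> 'f"
  assumes "prime p" and "p > 5" and "h > 0" and "q = p ^ h"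
    and "of_nat p = (0::'f)"
    and "alg_closed_subfield (const_field p :: 'f set)"
    and "a ^ q = a" and "a \<noteq> 0" and "b ^ q = b" and "b \<noteq> 0"
    and "m > 2" and "n \<ge> m"
    and "transcendental_over (const_field p) x"
    and "a * x ^ n + b * y ^ m = 1"
    and "hasse_derivation (const_field p) x D"
    and "(p dvd (2*n - 1) \<and> p dvd (m + 1)) \<or> (p dvd (2*m - 1) \<and> p dvd (n + 1)) \<or>
         (p dvd (2*n - 1) \<and> p dvd (m - 2)) \<or> (p dvd (2*m - 1) \<and> p dvd (n - 2)) \<or>
         (p dvd (m + 1) \<and> p dvd (n - 2)) \<or> (p dvd (n + 1) \<and> p dvd (m - 2))"
  shows "classical_wrt_conics D x y"
proof -
  have char: "CHAR('f) = p"
    using assms(1,5) by (rule CHAR_eq_prime)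
  then have prime: "prime CHAR('f)"
    using assms(1) by simp
  have "n \<ge> 2" "m \<ge> 2"
    using assms(11,12) by auto
  then obtain N S c :: 'f
    where scaling: "exponent_scaling n m N S c" "conic_wronskian_poly N S c \<noteq> 0"
    using exceptional_parameters[OF prime _ exceptional_residues[OF _ _ assms(16)[folded char]]] assms(2) char
    by auto
  let ?R = "frobenius_fixed h :: 'f set"
  have R_const: "?R \<subseteq> const_field p"
    using frobenius_fixed_subset_const_field[OF assms(3), where 'a = 'f] char by simp
  have "a \<in> ?R" "b \<in> ?R"
    using assms(4,7,9) char by (simp_all add: frobenius_fixed_def)
  have trans_u: "transcendental_over ?R (a * x ^ n)"
    using transcendental_over_subset[OF assms(13) R_const] \<open>a \<in> ?R\<close> assms(8,11,12) prime
    by (intro transcendental_over_mult_power frobenius_fixed_add[OF prime] frobenius_fixed_mult) auto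
  interpret fermat_curve "const_field p" x D a b y n m
    using assms(14,15) \<open>a \<in> ?R\<close> \<open>b \<in> ?R\<close> R_const
    by unfold_locales (auto simp: const_field_def)
  show ?thesis
    using trans_u Ints_subset_frobenius_fixed[OF prime] scaling assms(2,11,12) char prime
    by (intro classical_wrt_conics_if_transcendental[of ?R]) (auto simp: u_def)
qed

end
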